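(* Let $q$ be a set of operations on a set $\Omega$, write $\sim$ for $\sim_q$, and let $\pi\in\mathrm{Sim}(q)$. Then: (1) $\pi/\!\sim\;=\{([a],[b]): a\pi b\}$ is a permutation of $\Omega/\!\sim$; (2) if $R\subseteq\Omega^k$ is invariant under $\sim$ then $R\,\pi\,\pi(R)$; (3) for every ordinal $\alpha$, all $\bar a,\bar b\in\Omega^\alpha$ with $\bar a\,\pi\,\bar b$, and every formula $\phi(\bar x)$ of $\mathscr L^-_{\infty\infty}(q)$: $\Omega,q\models\phi(\bar a)\iff\Omega,q\models\phi(\bar b)$.
   Context: A similarity on $\Omega$ is a relation $\pi\subseteq\Omega\times\Omega$ such that every $a$ has some $b$ with $a\pi b$ and every $b$ has some $a$ with $a\pi b$; $\bar a\,\pi\,\bar b$ means coordinatewise relatedness; for $R,S\subseteq\Omega^k$, $R\,\pi\,S$ means that $\bar a\pi\bar b$ implies ($\bar a\in R\iff\bar b\in S$); $\pi(R)=\{\bar b:\exists\bar a\in R,\ \bar a\pi\bar b\}$. A set of operations is a set of finitary relations and quantifiers (subsets of $\mathcal P(\Omega^{k_1})\times\cdots\times\mathcal P(\Omega^{k_l})$) on $\Omega$; $\mathscr L^-_{\infty\infty}(q)$ is the equality-free infinitary logic with predicate symbols and Lindström quantifier symbols for members of $q$. $a\sim_q b$ iff for all formulas $\phi(x,\bar y)$ of $\mathscr L^-_{\infty\infty}(q)$ and tuples $\bar c$, $\phi(a,\bar c)\iff\phi(b,\bar c)$. $R$ is invariant under $\pi$ (resp. under $\sim$) if $\bar a\pi\bar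 b$ (resp. $\bar a\sim\bar b$) implies $\bar a\in R\iff\bar b\in R$. A quantifier $Q$ is $\sim$-invariant under $\pi$ if for all $\bar R,\bar S$ of its type, each component invariant under $\sim$, with $R_i\,\pi\,S_i$ for all $i$: $\bar R\in Q\iff\bar S\in Q$. $\mathrm{Sim}(q)$ is the set of similarities under which all relations of $q$ are invariant and all quantifiers of $q$ are $\sim_q$-invariant. *)

theory Defs
  imports Main
begin

text \<open>The universe \<Omega> is the type 'a. Tuples in \<Omega>^k are lists of length k.
  Operations: k-ary relations and Lindstroem quantifiers of type (k1,...,kl).\<close>

datatype 'a operation =
    Rel nat "'a list set"
  | Quant "nat list" "'a list set list set"

definition wf_operation :: "'a operation \<Rightarrow> bool" where
  "wf_operation o' = (case o' of
      Rel k R \<Rightarrow> R \<subseteq> {xs. length xs = k}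
    | Quant ks Q \<Rightarrow> Q \<subseteq> {Rs. length Rs = length ks \<and>
                              (\<forall>i<length ks. Rs ! i \<subseteq> {xs. length xs = ks ! i})})"

definition set_of_operations :: "'a operation set \<Rightarrow> bool" where
  "set_of_operations q = (\<forall>o'\<in>q. wf_operation o')"

text \<open>Equality-free infinitary formulas: variables of type 'v, conjunctions indexed by
  arbitrary subsets of the index type 'i, existential quantification over arbitrary sets
  of variables, and Lindstroem quantifier application binding a tuple of variables in
  each argument formula.\<close>

datatype ('a, 'v, 'i) form =
    Atom "'a list set" "'v list"
  | Neg "('a, 'v, 'i) form"
  | Conj "'i set" "'i \<Rightarrow> ('a, 'v, 'i) form"
  | Ex "'v set" "('a, 'v, 'i) form"
  | QApp "'a list set list set" "('v list \<times> ('a, 'v, 'i) form) list"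

definition upd :: "('v \<Rightarrow> 'a) \<Rightarrow> 'v list \<Rightarrow> 'a list \<Rightarrow> 'v \<Rightarrow> 'a" where
  "upd s xs as = fold (\<lambda>(x, a) f. f(x := a)) (zip xs as) s"

primrec sat :: "('a, 'v, 'i) form \<Rightarrow> ('v \<Rightarrow> 'a) \<Rightarrow> bool" where
  "sat (Atom R xs) s = (map s xs \<in> R)"
| "sat (Neg \<phi>) s = (\<not> sat \<phi> s)"
| "sat (Conj I F) s = (\<forall>i\<in>I. sat (F i) s)"
| "sat (Ex V \<phi>) s = (\<exists>t. (\<forall>v. v \<notin> V \<longrightarrow> t v = s v) \<and> sat \<phi> t)"
| "sat (QApp Q ps) s =
     (map (\<lambda>(xs, f). {as. length as = length xs \<and> f (upd s xs as)})
          (map (map_prod id sat) ps) \<in> Q)"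

text \<open>Formulas of L^-_{\<infinity>\<infinity>}(q): only symbols from q, with the right arities.\<close>

primrec wf_form :: "'a operation set \<Rightarrow> ('a, 'v, 'i) form \<Rightarrow> bool" where
  "wf_form q (Atom R xs) = (Rel (length xs) R \<in> q)"
| "wf_form q (Neg \<phi>) = wf_form q \<phi>"
| "wf_form q (Conj I F) = (\<forall>i\<in>I. wf_form q (F i))"
| "wf_form q (Ex V \<phi>) = wf_form q \<phi>"
| "wf_form q (QApp Q ps) =
     (Quant (map (\<lambda>(xs, b). length xs) (map (map_prod id (wf_form q)) ps)) Q \<in> q \<and>
      (\<forall>(xs, b)\<in>set (map (map_prod id (wf_form q)) ps). distinct xs \<and> b))"

definition simq :: "'v itself \<Rightarrow> 'i itself \<Rightarrow> 'a operation set \<Rightarrow> 'a \<Rightarrow> 'a \<Rightarrow> bool" where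
  "simq TV TI q a b =
     (\<forall>(\<phi> :: ('a, 'v, 'i) form) x s. wf_form q \<phi> \<longrightarrow> (sat \<phi> (s(x := a)) \<longleftrightarrow> sat \<phi> (s(x := b))))"

definition similarity :: "('a \<Rightarrow> 'a \<Rightarrow> bool) \<Rightarrow> bool" where
  "similarity \<pi> = ((\<forall>a. \<exists>b. \<pi> a b) \<and> (\<forall>b. \<exists>a. \<pi> a b))"

definition sim_rel :: "('a \<Rightarrow> 'a \<Rightarrow> bool) \<Rightarrow> 'a list set \<Rightarrow> 'a list set \<Rightarrow> bool" where
  "sim_rel \<pi> R S = (\<forall>as bs. list_all2 \<pi> as bs \<longrightarrow> (as \<in> R \<longleftrightarrow> bs \<in> S))"

definition sim_image :: "('a \<Rightarrow> 'a \<Rightarrow> bool) \<Rightarrow> 'a list set \<Rightarrow> 'a list set" where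
  "sim_image \<pi> R = {bs. \<exists>as\<in>R. list_all2 \<pi> as bs}"

definition invariant_under :: "('a \<Rightarrow> 'a \<Rightarrow> bool) \<Rightarrow> 'a list set \<Rightarrow> bool" where
  "invariant_under E R = (\<forall>as bs. list_all2 E as bs \<longrightarrow> (as \<in> R \<longleftrightarrow> bs \<in> R))"

definition quant_sim_invariant ::
  "('a \<Rightarrow> 'a \<Rightarrow> bool) \<Rightarrow> ('a \<Rightarrow> 'a \<Rightarrow> bool) \<Rightarrow> nat list \<Rightarrow> 'a list set list set \<Rightarrow> bool" where
  "quant_sim_invariant sim \<pi> ks Q =
     (\<forall>Rs Ss. length Rs = length ks \<longrightarrow> length Ss = length ks \<longrightarrow>
        (\<forall>i<length ks. Rs ! i \<subseteq> {xs. length xs = ks ! i} \<and> Ss ! i \<subseteq> {xs. length xs = ks ! i}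
            \<and> invariant_under sim (Rs ! i) \<and> invariant_under sim (Ss ! i)
            \<and> sim_rel \<pi> (Rs ! i) (Ss ! i)) \<longrightarrow>
        (Rs \<in> Q \<longleftrightarrow> Ss \<in> Q))"

definition Sim :: "'v itself \<Rightarrow> 'i itself \<Rightarrow> 'a operation set \<Rightarrow> ('a \<Rightarrow> 'a \<Rightarrow> bool) set" where
  "Sim TV TI q = {\<pi>. similarity \<pi> \<and>
      (\<forall>k R. Rel k R \<in> q \<longrightarrow> invariant_under \<pi> R) \<and>
      (\<forall>ks Q. Quant ks Q \<in> q \<longrightarrow> quant_sim_invariant (simq TV TI q) \<pi> ks Q)}"

end

theory Submission
  imports Defs
begin

text \<open>Part (3) comes first, by induction on formulas: the existential quantifier needs \<pi> to be
  total in both directions, and a Lindstroem quantifier needs that the relations defined by its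
  argument formulas are \<open>\<sim>\<close>-invariant, which holds since \<open>\<sim>\<close> is defined by these very formulas.
  Transporting a whole assignment along \<pi> then shows that \<open>a \<pi> b\<close> and \<open>a' \<pi> b'\<close> imply
  \<open>a \<sim> a' \<longleftrightarrow> b \<sim> b'\<close>. This makes \<pi> a bijection of \<open>\<sim>\<close>-classes, part (1), and it shows that two
  tuples \<pi>-related to the same tuple are \<open>\<sim>\<close>-equivalent, which gives part (2).\<close>

lemma upd_Nil [simp]: "upd s [] as = s" "upd s xs [] = s"
  by (simp_all add: upd_def)

lemma upd_Cons [simp]: "upd s (x # xs) (a # as) = upd (s(x := a)) xs as"
  by (simp add: upd_def)

lemma upd_fun_upd_commute:
  "x \<notin> set xs \<Longrightarrow> upd (s(x := a)) xs bs = (upd s xs bs)(x := a)"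
proof (induction xs arbitrary: s bs)
  case (Cons y ys)
  show ?case
  proof (cases bs)
    case (Cons b bs')
    have "upd (s(x := a)) (y # ys) bs = upd (s(y := b, x := a)) ys bs'"
      unfolding Cons upd_Cons using Cons.prems fun_upd_twist[of x y s a b] by simp
    also have "\<dots> = (upd (s(y := b)) ys bs')(x := a)"
      by (rule Cons.IH) (use Cons.prems in simp)
    also have "\<dots> = (upd s (y # ys) bs)(x := a)"
      unfolding Cons upd_Cons ..
    finally show ?thesis .
  qed simp
qed simp

lemma upd_rel:
  assumes "list_all2 P as bs" and "\<forall>v. P (s v) (t v)"
  shows "\<forall>v. P (upd s xs as v) (upd t xs bs v)"
  using assms
proof (induction xs arbitrary: as bs s t)
  case (Cons x xs)
  then show ?case
    by (cases as; cases bs) auto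
qed simp

lemma sat_upd_simq:
  fixes \<phi> :: "('a, 'v, 'i) form"
  assumes "list_all2 (simq TYPE('v) TYPE('i) q) as bs" and "distinct xs" and "wf_form q \<phi>"
  shows "sat \<phi> (upd s xs as) = sat \<phi> (upd s xs bs)"
  using assms(1,2)
proof (induction xs arbitrary: as bs s)
  case (Cons x xs)
  show ?case
  proof (cases as)
    case (Cons a as')
    with Cons.prems obtain b bs' where bs: "bs = b # bs'" "simq TYPE('v) TYPE('i) q a b"
      and rest: "list_all2 (simq TYPE('v) TYPE('i) q) as' bs'"
      by (cases bs) auto
    have x: "x \<notin> set xs" "distinct xs" using Cons.prems(2) by auto
    have "sat \<phi> (upd s (x # xs) as) = sat \<phi> (upd (s(x := a)) xs bs')"
      unfolding \<open>as = a # as'\<close> upd_Cons by (rule Cons.IH[OF rest x(2)])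
    also have "\<dots> = sat \<phi> ((upd s xs bs')(x := a))"
      unfolding upd_fun_upd_commute[OF x(1)] ..
    also have "\<dots> = sat \<phi> ((upd s xs bs')(x := b))"
      using bs(2) assms(3) unfolding simq_def by blast
    also have "\<dots> = sat \<phi> (upd s (x # xs) bs)"
      unfolding bs(1) upd_Cons upd_fun_upd_commute[OF x(1)] ..
    finally show ?thesis .
  qed (use Cons.prems in simp)
qed simp

definition defined_rel :: "('a, 'v, 'i) form \<Rightarrow> 'v list \<Rightarrow> ('v \<Rightarrow> 'a) \<Rightarrow> 'a list set" where
  "defined_rel \<phi> xs s = {as. length as = length xs \<and> sat \<phi> (upd s xs as)}"

lemma sat_QApp: "sat (QApp Q ps) s \<longleftrightarrow> map (\<lambda>(xs, \<phi>). defined_rel \<phi> xs s) ps \<in> Q"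
  by (simp add: defined_rel_def case_prod_unfold comp_def)

lemma wf_form_QApp:
  "wf_form q (QApp Q ps) \<longleftrightarrow>
     Quant (map (length \<circ> fst) ps) Q \<in> q \<and> (\<forall>(xs, \<phi>)\<in>set ps. distinct xs \<and> wf_form q \<phi>)"
  by (auto simp: case_prod_beta comp_def)

lemma defined_rel_length: "as \<in> defined_rel \<phi> xs s \<Longrightarrow> length as = length xs"
  by (auto simp: defined_rel_def)

lemma defined_rel_invariant_under_simq:
  fixes \<phi> :: "('a, 'v, 'i) form"
  assumes "distinct xs" and "wf_form q \<phi>"
  shows "invariant_under (simq TYPE('v) TYPE('i) q) (defined_rel \<phi> xs s)"
  unfolding invariant_under_def defined_rel_def
  using sat_upd_simq[OF _ assms] list_all2_lengthD by fastforce

lemma defined_rel_sim_rel: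
  assumes "\<And>s t. \<forall>v. \<pi> (s v) (t v) \<Longrightarrow> sat \<phi> s = sat \<phi> t" and "\<forall>v. \<pi> (s v) (t v)"
  shows "sim_rel \<pi> (defined_rel \<phi> xs s) (defined_rel \<phi> xs t)"
  unfolding sim_rel_def defined_rel_def
proof (intro allI impI)
  fix as bs assume rel: "list_all2 \<pi> as bs"
  then have "length as = length bs" and "sat \<phi> (upd s xs as) = sat \<phi> (upd t xs bs)"
    using assms(1)[OF upd_rel[OF rel assms(2)]] by (auto dest: list_all2_lengthD)
  then show "as \<in> {as. length as = length xs \<and> sat \<phi> (upd s xs as)} \<longleftrightarrow>
      bs \<in> {as. length as = length xs \<and> sat \<phi> (upd t xs as)}" by simp
qed

lemma quant_sim_invariant_map:
  assumes "quant_sim_invariant sim \<pi> (map k ps) Q"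
    and "\<And>p. p \<in> set ps \<Longrightarrow> R p \<subseteq> {xs. length xs = k p} \<and> S p \<subseteq> {xs. length xs = k p}
           \<and> invariant_under sim (R p) \<and> invariant_under sim (S p) \<and> sim_rel \<pi> (R p) (S p)"
  shows "map R ps \<in> Q \<longleftrightarrow> map S ps \<in> Q"
  using assms unfolding quant_sim_invariant_def by simp

lemma similarity_conversep: "similarity (conversep \<pi>) = similarity \<pi>"
  by (auto simp: similarity_def)

lemma similarity_adjust_assignment:
  assumes "similarity \<pi>"
  obtains t' where "\<forall>v. \<pi> (s v) (t' v)" and "\<forall>v. \<pi> (s v) (t v) \<longrightarrow> t' v = t v"
proof
  let ?t' = "\<lambda>v. if \<pi> (s v) (t v) then t v else (SOME b. \<pi> (s v) b)"
  show "\<forall>v. \<pi> (s v) (?t' v)"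
    using assms unfolding similarity_def by (auto intro: someI_ex)
  show "\<forall>v. \<pi> (s v) (t v) \<longrightarrow> ?t' v = t v"
    by simp
qed

lemma similarity_adjust_assignment_left:
  assumes "similarity \<pi>"
  obtains s' where "\<forall>v. \<pi> (s' v) (t v)" and "\<forall>v. \<pi> (s v) (t v) \<longrightarrow> s' v = s v"
  using similarity_adjust_assignment[of "conversep \<pi>" t s] assms
  by (simp add: similarity_conversep) blast

lemma sat_Ex_transfer:
  assumes "similarity \<pi>" and "\<forall>v. \<pi> (s v) (t v)"
    and IH: "\<And>s t. \<forall>v. \<pi> (s v) (t v) \<Longrightarrow> sat \<phi> s = sat \<phi> t"
    and sat_s: "sat (Ex V \<phi>) s"
  shows "sat (Ex V \<phi>) t"
proof -
  obtain s' where s': "\<forall>v. v \<notin> V \<longrightarrow> s' v = s v" "sat \<phi> s'"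
    using sat_s by auto
  obtain t' where t': "\<forall>v. \<pi> (s' v) (t' v)" "\<forall>v. \<pi> (s' v) (t v) \<longrightarrow> t' v = t v"
    using similarity_adjust_assignment[OF assms(1)] by blast
  have "\<forall>v. v \<notin> V \<longrightarrow> t' v = t v"
    using s'(1) t'(2) assms(2) by simp
  moreover have "sat \<phi> t'"
    using IH[OF t'(1)] s'(2) by simp
  ultimately show "sat (Ex V \<phi>) t" by auto
qed

theorem Sim_sat_iff:
  fixes \<phi> :: "('a, 'v, 'i) form"
  assumes "\<pi> \<in> Sim TYPE('v) TYPE('i) q" and "wf_form q \<phi>" and "\<forall>v. \<pi> (s v) (t v)"
  shows "sat \<phi> s \<longleftrightarrow> sat \<phi> t"
  using assms(2,3)
proof (induction \<phi> arbitrary: s t)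
  case (Atom R xs)
  then have "invariant_under \<pi> R" and "list_all2 \<pi> (map s xs) (map t xs)"
    using assms(1) by (auto simp: Sim_def list_all2_conv_all_nth)
  then show ?case unfolding invariant_under_def by simp
next
  case (Ex V \<phi>)
  have "similarity \<pi>" and "similarity (conversep \<pi>)"
    using assms(1) by (simp_all add: Sim_def similarity_conversep)
  with Ex sat_Ex_transfer[of \<pi> s t \<phi> V] sat_Ex_transfer[of "conversep \<pi>" t s \<phi> V]
  show ?case by (auto simp del: sat.simps)
next
  case (QApp Q ps)
  then have "Quant (map (length \<circ> fst) ps) Q \<in> q"
    and wf: "\<And>xs \<phi>. (xs, \<phi>) \<in> set ps \<Longrightarrow> distinct xs \<and> wf_form q \<phi>"
    by (auto simp: wf_form_QApp simp del: wf_form.simps)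
  then have "quant_sim_invariant (simq TYPE('v) TYPE('i) q) \<pi> (map (length \<circ> fst) ps) Q"
    using assms(1) by (simp add: Sim_def)
  moreover have "sim_rel \<pi> (defined_rel \<phi> xs s) (defined_rel \<phi> xs t)"
    if "(xs, \<phi>) \<in> set ps" for xs \<phi>
  proof (rule defined_rel_sim_rel)
    show "sat \<phi> s' = sat \<phi> t'" if "\<forall>v. \<pi> (s' v) (t' v)" for s' t'
      using QApp.IH[OF \<open>(xs, \<phi>) \<in> set ps\<close> _ _ that] wf[OF \<open>(xs, \<phi>) \<in> set ps\<close>] by simp
  qed (rule QApp.prems(2))
  ultimately show ?case
    unfolding sat_QApp
    by (intro quant_sim_invariant_map)
       (auto simp: wf defined_rel_invariant_under_simq dest: defined_rel_length)
qed auto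

lemma equivp_simq: "equivp (simq TV TI q)"
  by (rule equivpI) (auto simp: reflp_def symp_def transp_def simq_def)

lemma Sim_simq_iff:
  assumes "\<pi> \<in> Sim TYPE('v) TYPE('i) q" and "\<pi> a b" and "\<pi> a' b'"
  shows "simq TYPE('v) TYPE('i) q a a' \<longleftrightarrow> simq TYPE('v) TYPE('i) q b b'"
proof -
  have sim: "similarity \<pi>" using assms(1) by (simp add: Sim_def)
  have transfer: "sat \<phi> (s(x := c)) \<longleftrightarrow> sat \<phi> (t(x := d))"
    if "wf_form q \<phi>" "\<forall>v. \<pi> (s v) (t v)" "\<pi> c d" for \<phi> :: "('a, 'v, 'i) form" and s t x c d
    using Sim_sat_iff[OF assms(1) that(1)] that(2,3) by simp
  show ?thesis
  proof
    assume simq_a: "simq TYPE('v) TYPE('i) q a a'"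
    show "simq TYPE('v) TYPE('i) q b b'"
      unfolding simq_def
    proof (intro allI impI)
      fix \<phi> :: "('a, 'v, 'i) form" and x :: 'v and t :: "'v \<Rightarrow> 'a"
      assume wf: "wf_form q \<phi>"
      obtain s where st: "\<forall>v. \<pi> (s v) (t v)"
        using similarity_adjust_assignment_left[OF sim] by blast
      have "sat \<phi> (s(x := a)) = sat \<phi> (s(x := a'))"
        using simq_a wf unfolding simq_def by blast
      then show "sat \<phi> (t(x := b)) = sat \<phi> (t(x := b'))"
        using transfer[OF wf st assms(2)] transfer[OF wf st assms(3)] by simp
    qed
  next
    assume simq_b: "simq TYPE('v) TYPE('i) q b b'"
    show "simq TYPE('v) TYPE('i) q a a'"
      unfolding simq_def
    proof (intro allI impI)
      fix \<phi> :: "('a, 'v, 'i) form" and x :: 'v and s :: "'v \<Rightarrow> 'a"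
      assume wf: "wf_form q \<phi>"
      obtain t where st: "\<forall>v. \<pi> (s v) (t v)"
        using similarity_adjust_assignment[OF sim] by blast
      have "sat \<phi> (t(x := b)) = sat \<phi> (t(x := b'))"
        using simq_b wf unfolding simq_def by blast
      then show "sat \<phi> (s(x := a)) = sat \<phi> (s(x := a'))"
        using transfer[OF wf st assms(2)] transfer[OF wf st assms(3)] by simp
    qed
  qed
qed

lemma similarity_Image_class:
  assumes "equiv UNIV E" and "similarity \<pi>"
    and compat: "\<And>a b a' b'. \<pi> a b \<Longrightarrow> \<pi> a' b' \<Longrightarrow> (a, a') \<in> E \<longleftrightarrow> (b, b') \<in> E"
    and "\<pi> a b"
  shows "{(a, b). \<pi> a b} `` (E `` {a}) = E `` {b}"
proof (intro equalityI subsetI)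
  fix b' assume "b' \<in> {(a, b). \<pi> a b} `` (E `` {a})"
  then show "b' \<in> E `` {b}"
    using compat[OF \<open>\<pi> a b\<close>] by blast
next
  fix b' assume "b' \<in> E `` {b}"
  moreover obtain a' where "\<pi> a' b'"
    using \<open>similarity \<pi>\<close> by (auto simp: similarity_def)
  ultimately show "b' \<in> {(a, b). \<pi> a b} `` (E `` {a})"
    using compat[OF \<open>\<pi> a b\<close>] by blast
qed

lemma similarity_quotient_bij:
  assumes E: "equiv UNIV E" and sim: "similarity \<pi>"
    and compat: "\<And>a b a' b'. \<pi> a b \<Longrightarrow> \<pi> a' b' \<Longrightarrow> (a, a') \<in> E \<longleftrightarrow> (b, b') \<in> E"
  shows "\<exists>f. bij_betw f (UNIV // E) (UNIV // E) \<and>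
           {(E `` {a}, E `` {b}) | a b. \<pi> a b} = {(X, f X) | X. X \<in> UNIV // E}"
proof (intro exI conjI)
  let ?f = "\<lambda>X. {(a, b). \<pi> a b} `` X"
  have f: "?f (E `` {a}) = E `` {b}" if "\<pi> a b" for a b
    using similarity_Image_class[OF E sim compat that] .
  have fw: "\<exists>b. \<pi> a b" and bw: "\<exists>a. \<pi> a b" for a b
    using sim by (auto simp: similarity_def)
  have classes: "E `` {a} = E `` {a'} \<longleftrightarrow> (a, a') \<in> E" for a a'
    using E by (simp add: equiv_class_eq_iff)
  show "bij_betw ?f (UNIV // E) (UNIV // E)"
  proof (rule bij_betw_imageI)
    show "inj_on ?f (UNIV // E)"
    proof (rule inj_onI)
      fix X Y assume "X \<in> UNIV // E" "Y \<in> UNIV // E" and fXY: "?f X = ?f Y"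
      then obtain a a' where X: "X = E `` {a}" and Y: "Y = E `` {a'}"
        by (auto elim!: quotientE)
      obtain b b' where "\<pi> a b" "\<pi> a' b'" using fw by blast
      then show "X = Y"
        using fXY f classes compat unfolding X Y by metis
    qed
    show "?f ` (UNIV // E) = UNIV // E"
    proof (intro equalityI subsetI)
      fix Y assume "Y \<in> ?f ` (UNIV // E)"
      then obtain a where Y: "Y = ?f (E `` {a})" by (auto elim!: quotientE)
      obtain b where "\<pi> a b" using fw by blast
      then show "Y \<in> UNIV // E"
        using f unfolding Y by (simp add: quotientI)
    next
      fix Y assume "Y \<in> UNIV // E"
      then obtain b where Y: "Y = E `` {b}" by (auto elim!: quotientE)
      obtain a where "\<pi> a b" using bw by blast
      then have "Y = ?f (E `` {a})" using f Y by simp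
      then show "Y \<in> ?f ` (UNIV // E)" by (simp add: quotientI)
    qed
  qed
  show "{(E `` {a}, E `` {b}) | a b. \<pi> a b} = {(X, ?f X) | X. X \<in> UNIV // E}"
  proof (intro equalityI subsetI)
    fix p assume "p \<in> {(E `` {a}, E `` {b}) | a b. \<pi> a b}"
    then obtain a b where p: "p = (E `` {a}, E `` {b})" and "\<pi> a b" by blast
    have "p = (E `` {a}, ?f (E `` {a}))"
      unfolding f[OF \<open>\<pi> a b\<close>] by (rule p)
    moreover have "E `` {a} \<in> UNIV // E"
      by (rule quotientI) simp
    ultimately show "p \<in> {(X, ?f X) | X. X \<in> UNIV // E}" by blast
  next
    fix p assume "p \<in> {(X, ?f X) | X. X \<in> UNIV // E}"
    then obtain a where p: "p = (E `` {a}, ?f (E `` {a}))"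
      by (auto elim: quotientE)
    obtain b where "\<pi> a b" using fw by blast
    with p f show "p \<in> {(E `` {a}, E `` {b}) | a b. \<pi> a b}" by blast
  qed
qed

lemma sim_rel_sim_image:
  assumes "invariant_under E R" and "\<And>a a' b. \<pi> a b \<Longrightarrow> \<pi> a' b \<Longrightarrow> E a a'"
  shows "sim_rel \<pi> R (sim_image \<pi> R)"
  unfolding sim_rel_def sim_image_def
proof (intro allI impI iffI)
  fix as bs assume "list_all2 \<pi> as bs" "bs \<in> {bs. \<exists>as\<in>R. list_all2 \<pi> as bs}"
  then obtain as' where "as' \<in> R" "list_all2 \<pi> as' bs" "list_all2 \<pi> as bs" by blast
  then have "list_all2 E as' as"
    using assms(2) by (auto simp: list_all2_conv_all_nth)
  with \<open>as' \<in> R\<close> show "as \<in> R"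
    using assms(1) unfolding invariant_under_def by blast
qed blast

theorem lemma13:
  fixes q :: "'a operation set" and \<pi> :: "'a \<Rightarrow> 'a \<Rightarrow> bool"
  assumes "set_of_operations q"
    and "\<pi> \<in> Sim TYPE('v) TYPE('i) q"
  defines "E \<equiv> {(a, b). simq TYPE('v) TYPE('i) q a b}"
  shows "(\<exists>f. bij_betw f (UNIV // E) (UNIV // E) \<and>
            {(E `` {a}, E `` {b}) | a b. \<pi> a b} = {(X, f X) | X. X \<in> UNIV // E})
       \<and> (\<forall>k R. R \<subseteq> {xs. length xs = k} \<longrightarrow> invariant_under (simq TYPE('v) TYPE('i) q) R
            \<longrightarrow> sim_rel \<pi> R (sim_image \<pi> R))
       \<and> (\<forall>(\<phi> :: ('a, 'v, 'i) form) s t. wf_form q \<phi> \<longrightarrow> (\<forall>v. \<pi> (s v) (t v))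
            \<longrightarrow> (sat \<phi> s \<longleftrightarrow> sat \<phi> t))"
proof (intro conjI allI impI)
  have "equiv UNIV E"
    unfolding E_def using equivp_simq by (simp add: equivp_equiv)
  moreover have "similarity \<pi>"
    using assms(2) by (simp add: Sim_def)
  ultimately show "\<exists>f. bij_betw f (UNIV // E) (UNIV // E) \<and>
            {(E `` {a}, E `` {b}) | a b. \<pi> a b} = {(X, f X) | X. X \<in> UNIV // E}"
    by (rule similarity_quotient_bij) (simp add: E_def Sim_simq_iff[OF assms(2)])
next
  fix k R
  assume "invariant_under (simq TYPE('v) TYPE('i) q) R"
  then show "sim_rel \<pi> R (sim_image \<pi> R)"
    by (rule sim_rel_sim_image)
       (metis Sim_simq_iff[OF assms(2)] equivp_reflp[OF equivp_simq])
qed (use Sim_sat_iff[OF assms(2)] in blast)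

end
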